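(* Let $F : \mathbb{R}^n \to \mathbb{R}^n$ be real entire, i.e., real analytic with an extension to an entire map $\mathbb{C}^n \to \mathbb{C}^n$. Suppose the Koopman operator $\mathcal{K}_F g = g\circ F$ is bounded on the native space of the Gaussian RBF kernel over $\mathbb{R}^n$ (with domain the whole space). Then $F$ is affine: $F(x) = Ax + b$ for some $A \in \mathbb{R}^{n\times n}$ and $b \in \mathbb{R}^n$.
   Context: The Gaussian RBF kernel on $\mathbb{R}^n$ is $K(x,y) = \exp(-\|x-y\|_2^2/2)$. Its native space is the real RKHS of functions on $\mathbb{R}^n$ having this reproducing kernel. *)

theory Defs
  imports "HOL-Analysis.Analysis"
begin

definition gauss_kernel :: "real^'n \<Rightarrow> real^'n \<Rightarrow> real" where
  "gauss_kernel x y = exp (- (norm (x - y))\<^sup>2 / 2)"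

text \<open>Elements of the pre-Hilbert space span of kernel sections, represented by
  finite lists of (coefficient, centre) pairs: the function
  z maps to the sum of c * K(z,p).\<close>

definition pre_eval :: "(real \<times> (real^'n)) list \<Rightarrow> real^'n \<Rightarrow> real" where
  "pre_eval cs z = (\<Sum>(c,p)\<leftarrow>cs. c * gauss_kernel z p)"

definition pre_norm_sq :: "(real \<times> (real^'n)) list \<Rightarrow> real" where
  "pre_norm_sq cs = (\<Sum>(c,p)\<leftarrow>cs. \<Sum>(d,q)\<leftarrow>cs. c * d * gauss_kernel p q)"

definition pre_diff :: "(real \<times> (real^'n)) list \<Rightarrow> (real \<times> (real^'n)) list \<Rightarrow> (real \<times> (real^'n)) list" where
  "pre_diff a b = a @ map (\<lambda>(c,p). (- c, p)) b"

definition approximates :: "(nat \<Rightarrow> (real \<times> (real^'n)) list) \<Rightarrow> (real^'n \<Rightarrow> real) \<Rightarrow> bool" where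
  "approximates s f \<longleftrightarrow>
     (\<forall>e>0. \<exists>N. \<forall>m\<ge>N. \<forall>k\<ge>N. pre_norm_sq (pre_diff (s m) (s k)) < e) \<and>
     (\<forall>x. (\<lambda>k. pre_eval (s k) x) \<longlonglongrightarrow> f x)"

text \<open>The native space (RKHS) of the Gaussian kernel: the completion of the span of
  kernel sections, realised as functions on R^n.\<close>

definition native_space :: "(real^'n \<Rightarrow> real) set" where
  "native_space = {f. \<exists>s. approximates s f}"

definition native_norm :: "(real^'n \<Rightarrow> real) \<Rightarrow> real" where
  "native_norm f = (THE r. \<forall>s. approximates s f \<longrightarrow> (\<lambda>k. sqrt (pre_norm_sq (s k))) \<longlonglongrightarrow> r)"

definition koopman_bounded :: "(real^'n \<Rightarrow> real^'n) \<Rightarrow> bool" where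
  "koopman_bounded F \<longleftrightarrow>
     (\<forall>g\<in>native_space. g \<circ> F \<in> native_space) \<and>
     (\<exists>C. \<forall>g\<in>native_space. native_norm (g \<circ> F) \<le> C * native_norm g)"

definition entire_map :: "(complex^'n \<Rightarrow> complex^'m) \<Rightarrow> bool" where
  "entire_map G \<longleftrightarrow>
     (\<forall>z. \<exists>L. (G has_derivative L) (at z) \<and> (\<forall>c v. L (c *s v) = c *s L v))"

definition real_entire :: "(real^'n \<Rightarrow> real^'m) \<Rightarrow> bool" where
  "real_entire F \<longleftrightarrow>
     (\<exists>G. entire_map G \<and>
        (\<forall>x. G (\<chi> i. complex_of_real (x $ i)) = (\<chi> j. complex_of_real (F x $ j))))"

end

theory Submission
  imports Defs "HOL-Complex_Analysis.Complex_Analysis"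
begin

text \<open>Expanding \<open>exp \<langle>p, q\<rangle>\<close> in its power series writes the Gaussian kernel as
  \<open>K p q = \<Sum>\<^sub>k \<Sum>\<^sub>\<alpha> \<phi>(p) p\<^sup>\<alpha> \<phi>(q) q\<^sup>\<alpha> / k!\<close> with \<open>\<phi>(p) = exp (-\<parallel>p\<parallel>\<^sup>2/2)\<close>, the inner sum running
  over all \<open>\<alpha> \<in> {..<k} \<rightarrow> n\<close>. This makes the norm of a kernel expansion a weighted sum of
  squares and, by Cauchy-Schwarz, bounds its entire extension to \<open>\<complex>\<^sup>n\<close> by
  \<open>\<bar>f z\<bar> \<le> \<parallel>f\<parallel> exp \<bar>Im z\<bar>\<^sup>2\<close>. These bounds pass to the completion, so every \<open>g\<close> in the native
  space extends along each complex line \<open>w \<mapsto> x + w v\<close> to an entire function bounded by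
  \<open>\<parallel>g\<parallel> exp ((Im w)\<^sup>2 \<parallel>v\<parallel>\<^sup>2)\<close>.

  Let \<open>G\<close> be the entire extension of \<open>F\<close>. For \<open>g = K(-, a) \<circ> F\<close> the extension along a line is
  \<open>K(G(x + w v), a)\<close> by the identity theorem, and choosing \<open>a = Re (G z)\<close> gives
  \<open>\<bar>K(G z, a)\<bar> = exp (\<bar>Im (G z)\<bar>\<^sup>2 / 2)\<close>. Boundedness of the Koopman operator therefore yields
  \<open>\<bar>Im (G (x + w v))\<bar>\<^sup>2 \<le> D + 2 (Im w)\<^sup>2 \<parallel>v\<parallel>\<^sup>2\<close>: along every complex line the imaginary parts
  of the coordinates of \<open>G\<close> grow at most linearly. By the Borel-Caratheodory inequality and
  Liouville's theorem an entire function with this growth is affine, so \<open>F\<close> is affine on every real line,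
  and a map that is affine on every line is affine.\<close>

lemma sum_list_sum_list_swap:
  "(\<Sum>x\<leftarrow>xs. \<Sum>y\<leftarrow>ys. f x y) = (\<Sum>y\<leftarrow>ys. \<Sum>x\<leftarrow>xs. f x y :: 'a::comm_monoid_add)"
  by (induction xs) (auto simp: sum_list_addf)

lemma sum_list_sum_swap:
  "(\<Sum>x\<leftarrow>xs. \<Sum>g\<in>A. f x g) = (\<Sum>g\<in>A. \<Sum>x\<leftarrow>xs. f x g :: 'a::comm_monoid_add)"
  by (induction xs) (auto simp: sum.distrib)

lemma sum_list_mult_sum_list:
  "(\<Sum>x\<leftarrow>xs. f x) * (\<Sum>y\<leftarrow>ys. g y) = (\<Sum>x\<leftarrow>xs. \<Sum>y\<leftarrow>ys. f x * g y :: 'a::comm_semiring_0)"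
  by (induction xs) (auto simp: distrib_right sum_list_const_mult)

lemma sum_list_divide_distrib:
  "(\<Sum>x\<leftarrow>xs. f x / c) = (\<Sum>x\<leftarrow>xs. f x) / (c :: 'a::field)"
  by (simp add: divide_inverse sum_list_mult_const)

lemma sums_sum_list:
  assumes "\<And>x. x \<in> set xs \<Longrightarrow> (\<lambda>k. f x k) sums s x"
  shows "(\<lambda>k. \<Sum>x\<leftarrow>xs. f x k) sums (\<Sum>x\<leftarrow>xs. s x :: 'a::real_normed_vector)"
  using assms by (induction xs) (auto intro: sums_add)

lemma tendsto_sum_list:
  assumes "\<And>x. x \<in> set xs \<Longrightarrow> ((\<lambda>m. g m x) \<longlongrightarrow> l x) F"
  shows "((\<lambda>m. \<Sum>x\<leftarrow>xs. g m x) \<longlongrightarrow> (\<Sum>x\<leftarrow>xs. l x :: 'a::real_normed_vector)) F"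
  using assms by (induction xs) (auto intro: tendsto_add)

lemma sum_lessThan_le_sums:
  fixes f :: "nat \<Rightarrow> real"
  assumes "f sums s" and "\<And>k. 0 \<le> f k"
  shows "(\<Sum>k<N. f k) \<le> s"
  using sum_le_suminf[OF sums_summable[OF assms(1)], of "{..<N}"] sums_unique[OF assms(1)] assms(2)
  by auto

section \<open>Maps that are affine along every line\<close>

lemma linear_if_affine_on_lines:
  fixes f :: "'a::real_vector \<Rightarrow> 'b::real_vector"
  assumes line: "\<And>x v. \<exists>d. \<forall>t. f (x + t *\<^sub>R v) = f x + t *\<^sub>R d"
  shows "linear (\<lambda>x. f x - f 0)"
proof -
  define g where "g x = f x - f 0" for x
  have scale: "g (t *\<^sub>R x) = t *\<^sub>R g x" for t x
  proof -
    obtain d where d: "\<And>t. f (0 + t *\<^sub>R x) = f 0 + t *\<^sub>R d" using line[of 0 x] by blast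
    show ?thesis using d[of 1] d[of t] by (simp add: g_def)
  qed
  have add: "g (x + y) = g x + g y" for x y
  proof -
    obtain d where d: "\<And>t. f (x + t *\<^sub>R (y - x)) = f x + t *\<^sub>R d" using line[of x "y - x"] by blast
    have "x + (1/2) *\<^sub>R (y - x) = (1/2) *\<^sub>R (x + y)"
      by (simp add: algebra_simps) (metis scaleR_half_double scaleR_add_right)
    then have mid: "f ((1/2) *\<^sub>R (x + y)) = f x + (1/2) *\<^sub>R d" using d[of "1/2"] by simp
    have "g (x + y) = 2 *\<^sub>R g ((1/2) *\<^sub>R (x + y))" by (simp add: scale)
    also have "\<dots> = 2 *\<^sub>R (f x - f 0) + d" unfolding g_def mid by (simp add: algebra_simps)
    also have "\<dots> = g x + g y" using d[of 1] by (simp add: g_def scaleR_2 algebra_simps)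
    finally show ?thesis .
  qed
  show ?thesis using add scale unfolding g_def[symmetric] by (intro linearI)
qed

section \<open>Entire functions\<close>

lemma holomorphic_on_uniform_limit_UNIV:
  fixes S :: "nat \<Rightarrow> complex \<Rightarrow> complex"
  assumes holo: "\<And>k. S k holomorphic_on UNIV"
    and lim: "\<And>r. uniform_limit (cball 0 r) S L sequentially"
  shows "L holomorphic_on UNIV"
  unfolding holomorphic_on_def
proof
  fix w :: complex
  obtain "L holomorphic_on ball 0 (cmod w + 1)"
  proof (rule holomorphic_uniform_limit[OF _ lim])
    show "\<forall>\<^sub>F k in sequentially. continuous_on (cball 0 (cmod w + 1)) (S k)
        \<and> S k holomorphic_on ball 0 (cmod w + 1)"
      using holo by (intro always_eventually allI conjI holomorphic_on_imp_continuous_on)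
        (auto intro: holomorphic_on_subset)
  qed auto
  then have "L field_differentiable (at w)"
    by (rule holomorphic_on_imp_differentiable_at) auto
  then show "L field_differentiable (at w within UNIV)" by simp
qed

lemma entire_eq_if_eq_on_reals:
  fixes f g :: "complex \<Rightarrow> complex"
  assumes "f holomorphic_on UNIV" "g holomorphic_on UNIV"
    and "\<And>t. f (complex_of_real t) = g (complex_of_real t)"
  shows "f w = g w"
proof -
  have limpt: "(0::complex) islimpt \<real>"
    unfolding islimpt_approachable
  proof (intro allI impI)
    fix e :: real assume "e > 0"
    then show "\<exists>u\<in>\<real>. u \<noteq> (0::complex) \<and> dist u 0 < e"
      by (intro bexI[where x="complex_of_real (e/2)"]) (auto simp: dist_norm)
  qed
  have "f w - g w = 0"
  proof (rule analytic_continuation[of "\<lambda>u. f u - g u" UNIV \<real> 0])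
    show "(\<lambda>u. f u - g u) holomorphic_on UNIV" by (intro holomorphic_intros assms(1,2))
    show "f u - g u = 0" if "u \<in> \<real>" for u
      using that assms(3) by (auto elim: Reals_cases)
  qed (use limpt in auto)
  then show ?thesis by simp
qed

lemma norm_less_norm_double_minus:
  fixes z :: complex
  assumes "M > 0" and "Re z < M"
  shows "cmod z < cmod (complex_of_real (2 * M) - z)"
proof (rule power2_less_imp_less)
  have "(cmod (complex_of_real (2 * M) - z))\<^sup>2 - (cmod z)\<^sup>2 = 4 * (M * (M - Re z))"
    unfolding cmod_power2 by (simp add: power2_eq_square algebra_simps)
  moreover have "0 < M * (M - Re z)" using assms by simp
  ultimately show "(cmod z)\<^sup>2 < (cmod (complex_of_real (2 * M) - z))\<^sup>2" by linarith
qed simp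

text \<open>The Borel-Caratheodory inequality for \<open>f 0 = 0\<close>: the Cayley transform
  \<open>g = f / (2M - f)\<close> maps the disc of radius \<open>R\<close> into the unit disc, so Schwarz's lemma
  applies to \<open>g (R u)\<close>.\<close>

lemma Borel_Caratheodory_bound:
  fixes f :: "complex \<Rightarrow> complex"
  assumes holo: "f holomorphic_on ball 0 R" and R: "R > 0" and f0: "f 0 = 0" and M: "M > 0"
    and Re_less: "\<And>u. cmod u < R \<Longrightarrow> Re (f u) < M" and w: "cmod w < R"
  shows "cmod (f w) \<le> 2 * M * cmod w / (R - cmod w)"
proof -
  have norm_less: "cmod (f u) < cmod (2 * M - f u)" and denom_nonzero: "2 * M - f u \<noteq> 0"
    if "cmod u < R" for u
    using norm_less_norm_double_minus[OF M Re_less[OF that]] by auto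
  define g where "g u = f (of_real R * u) / (2 * M - f (of_real R * u))" for u
  have scaled: "cmod (of_real R * u) < R" if "cmod u < 1" for u
    using that R by (simp add: norm_mult)
  have g_holo: "g holomorphic_on ball 0 1"
  proof -
    have "(f \<circ> (\<lambda>u. of_real R * u)) holomorphic_on ball 0 1"
      by (rule holomorphic_on_compose_gen[OF _ holo]) (auto intro!: holomorphic_intros simp: scaled)
    then have f_scaled_holo: "(\<lambda>u. f (of_real R * u)) holomorphic_on ball 0 1" by (simp add: o_def)
    show ?thesis unfolding g_def
      by (intro holomorphic_intros f_scaled_holo) (use denom_nonzero scaled in auto)
  qed
  have g0: "g 0 = 0" by (simp add: g_def f0)
  have g_less_1: "cmod (g u) < 1" if "cmod u < 1" for u
    using norm_less[OF scaled[OF that]] denom_nonzero[OF scaled[OF that]] by (simp add: g_def norm_divide divide_less_eq)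
  define u where "u = w / of_real R"
  have u_less_1: "cmod u < 1" using w R by (simp add: u_def norm_divide)
  have g_Schwarz: "cmod (g u) \<le> cmod u"
    using Schwarz_Lemma(1)[OF g_holo g0 g_less_1 u_less_1] .
  have Ru: "of_real R * u = w" using R by (simp add: u_def)
  have f_eq: "f w = 2 * M * g u / (1 + g u)"
  proof -
    have "g u * (2 * M - f w) = f w" using denom_nonzero[OF w] by (simp add: g_def Ru)
    then have "f w * (1 + g u) = 2 * M * g u" by (simp add: algebra_simps)
    moreover have "1 + g u \<noteq> 0"
    proof
      assume "1 + g u = 0" then have "g u = -1" by (simp add: add_eq_0_iff)
      with g_less_1[OF u_less_1] show False by simp
    qed
    ultimately show ?thesis by (simp add: field_simps)
  qed
  have "cmod (1 + g u) \<ge> 1 - cmod (g u)"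
    using norm_triangle_ineq4[of "1 + g u" "g u"] by simp
  then have "2 * M * cmod (g u) / cmod (1 + g u) \<le> 2 * M * cmod (g u) / (1 - cmod (g u))"
    using g_less_1[OF u_less_1] M by (intro divide_left_mono mult_pos_pos) auto
  then have "cmod (f w) \<le> 2 * M * cmod (g u) / (1 - cmod (g u))"
    using M unfolding f_eq by (simp add: norm_mult norm_divide)
  also have "\<dots> \<le> 2 * M * cmod u / (1 - cmod u)"
    using g_Schwarz u_less_1 M g_less_1[OF u_less_1] by (simp add: field_simps mult_left_mono mult_right_mono)
  also have "\<dots> = 2 * M * cmod w / (R - cmod w)"
    using R w by (simp add: u_def norm_divide field_simps)
  finally show ?thesis .
qed

lemma entire_affine_if_abs_Im_le:
  fixes h :: "complex \<Rightarrow> complex"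
  assumes holo: "h holomorphic_on UNIV" and A: "A \<ge> 0" and B: "B \<ge> 0"
    and Im_le: "\<And>w. \<bar>Im (h w)\<bar> \<le> A * cmod w + B"
  shows "h w = h 0 + deriv h 0 * w"
proof -
  have diff_bound: "cmod (h z - h 0) \<le> 4 * A * cmod z + 4 * B + 2" for z
  proof (cases "z = 0")
    case True then show ?thesis using A B by simp
  next
    case False
    define R where "R = 2 * cmod z"
    define M where "M = A * R + 2 * B + 1"
    define f where "f u = - \<i> * (h u - h 0)" for u
    have R: "R > 0" using False by (simp add: R_def)
    have "A * R \<ge> 0" using A R by simp
    then have M: "M > 0" using B by (simp add: M_def)
    have "cmod (f z) \<le> 2 * M * cmod z / (R - cmod z)"
    proof (rule Borel_Caratheodory_bound[OF _ R _ M])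
      show "f holomorphic_on ball 0 R" unfolding f_def
        by (intro holomorphic_intros holomorphic_on_subset[OF holo]) auto
      show "f 0 = 0" by (simp add: f_def)
      show "cmod z < R" using False by (simp add: R_def)
      fix u :: complex assume u: "cmod u < R"
      have "Re (f u) = Im (h u) - Im (h 0)" by (simp add: f_def)
      also have "\<dots> \<le> (A * cmod u + B) + B"
        using Im_le[of u] Im_le[of 0] by (simp add: abs_le_iff)
      also have "\<dots> \<le> A * R + 2 * B" using u A by (simp add: mult_left_mono)
      finally show "Re (f u) < M" by (simp add: M_def)
    qed
    also have "\<dots> = 2 * M" using False by (simp add: R_def field_simps)
    finally have "cmod (f z) \<le> 2 * M" .
    moreover have "cmod (f z) = cmod (h z - h 0)" by (simp add: f_def norm_mult)
    ultimately show ?thesis by (simp add: M_def R_def algebra_simps)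
  qed
  have "h w = (\<Sum>k\<le>1. (deriv ^^ k) h 0 / fact k * w ^ k)"
  proof (rule Liouville_polynomial[OF holo, of 1 "cmod (h 0) + 4 * A + 4 * B + 2"])
    fix z :: complex assume z: "1 \<le> cmod z"
    have "cmod (h z) \<le> cmod (h 0) + cmod (h z - h 0)"
      using norm_triangle_ineq[of "h 0" "h z - h 0"] by simp
    also have "\<dots> \<le> cmod (h 0) + 4 * A * cmod z + 4 * B + 2" using diff_bound[of z] by simp
    also have "\<dots> \<le> (cmod (h 0) + 4 * A + 4 * B + 2) * cmod z ^ 1"
    proof -
      have "(cmod (h 0) + 4 * B + 2) * 1 \<le> (cmod (h 0) + 4 * B + 2) * cmod z"
        using z B by (intro mult_left_mono) auto
      then show ?thesis by (simp add: algebra_simps)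
    qed
    finally show "cmod (h z) \<le> (cmod (h 0) + 4 * A + 4 * B + 2) * cmod z ^ 1" .
  qed
  then show ?thesis by (simp add: atMost_Suc)
qed

lemma gauss_kernel_commute: "gauss_kernel x y = gauss_kernel y x"
  by (simp add: gauss_kernel_def norm_minus_commute)

lemma gauss_kernel_self [simp]: "gauss_kernel x x = 1"
  by (simp add: gauss_kernel_def)

definition pre_inner :: "(real \<times> (real^'n)) list \<Rightarrow> (real \<times> (real^'n)) list \<Rightarrow> real" where
  "pre_inner a b = (\<Sum>(c,p)\<leftarrow>a. c * pre_eval b p)"

definition pre_scale :: "real \<Rightarrow> (real \<times> (real^'n)) list \<Rightarrow> (real \<times> (real^'n)) list" where
  "pre_scale t a = map (\<lambda>(c,p). (t * c, p)) a"

lemma pre_eval_append [simp]: "pre_eval (a @ b) z = pre_eval a z + pre_eval b z"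
  by (simp add: pre_eval_def)

lemma pre_eval_scale [simp]: "pre_eval (pre_scale t a) z = t * pre_eval a z"
  unfolding pre_eval_def pre_scale_def by (induction a) (auto simp: algebra_simps)

lemma pre_eval_diff [simp]: "pre_eval (pre_diff a b) z = pre_eval a z - pre_eval b z"
proof -
  have "pre_eval (map (\<lambda>(c,p). (- c, p)) b) z = - pre_eval b z"
    unfolding pre_eval_def by (induction b) auto
  then show ?thesis by (simp add: pre_diff_def)
qed

lemma pre_inner_append_left: "pre_inner (a @ b) d = pre_inner a d + pre_inner b d"
  by (simp add: pre_inner_def)

lemma pre_inner_scale_left: "pre_inner (pre_scale t a) d = t * pre_inner a d"
  unfolding pre_inner_def pre_scale_def by (induction a) (auto simp: algebra_simps)

lemma pre_inner_append_right: "pre_inner d (a @ b) = pre_inner d a + pre_inner d b"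
  unfolding pre_inner_def by (induction d) (auto simp: algebra_simps)

lemma pre_inner_scale_right: "pre_inner d (pre_scale t a) = t * pre_inner d a"
  unfolding pre_inner_def by (induction d) (auto simp: algebra_simps)

lemma pre_inner_diff_right: "pre_inner d (pre_diff a b) = pre_inner d a - pre_inner d b"
  unfolding pre_inner_def by (induction d) (auto simp: algebra_simps)

lemma pre_inner_eval_cong_right:
  "(\<And>z. pre_eval x z = pre_eval y z) \<Longrightarrow> pre_inner a x = pre_inner a y"
  unfolding pre_inner_def by simp

lemma pre_inner_double_sum:
  "pre_inner a b = (\<Sum>(c,p)\<leftarrow>a. \<Sum>(d,q)\<leftarrow>b. c * d * gauss_kernel p q)"
  unfolding pre_inner_def pre_eval_def
  by (simp add: sum_list_const_mult[symmetric] split_def mult.assoc gauss_kernel_commute)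

lemma pre_inner_commute: "pre_inner a b = pre_inner b a"
proof -
  have "(\<Sum>x\<leftarrow>a. \<Sum>y\<leftarrow>b. fst x * fst y * gauss_kernel (snd x) (snd y)) =
        (\<Sum>y\<leftarrow>b. \<Sum>x\<leftarrow>a. fst x * fst y * gauss_kernel (snd x) (snd y))"
    by (rule sum_list_sum_list_swap)
  then show ?thesis unfolding pre_inner_double_sum
    by (simp add: split_def gauss_kernel_commute mult.commute mult.left_commute)
qed

lemma pre_norm_sq_eq_pre_inner: "pre_norm_sq a = pre_inner a a"
  by (simp add: pre_inner_double_sum pre_norm_sq_def)

lemma pre_norm_sq_eval_cong:
  assumes "\<And>z. pre_eval x z = pre_eval y z"
  shows "pre_norm_sq x = pre_norm_sq y"
proof -
  have "pre_inner x x = pre_inner x y" by (rule pre_inner_eval_cong_right) (use assms in auto)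
  also have "\<dots> = pre_inner y x" by (rule pre_inner_commute)
  also have "\<dots> = pre_inner y y" by (rule pre_inner_eval_cong_right) (use assms in auto)
  finally show ?thesis by (simp add: pre_norm_sq_eq_pre_inner)
qed

lemma pre_norm_sq_append:
  "pre_norm_sq (a @ b) = pre_norm_sq a + 2 * pre_inner a b + pre_norm_sq b"
  unfolding pre_norm_sq_eq_pre_inner pre_inner_append_left pre_inner_append_right
  using pre_inner_commute[of b a] by simp

section \<open>Feature expansion of the Gaussian kernel\<close>

definition index_tuples :: "nat \<Rightarrow> (nat \<Rightarrow> 'n::finite) set" where
  "index_tuples k = PiE {..<k} (\<lambda>_. UNIV)"

definition tuple_prod :: "'a::comm_ring_1^'n \<Rightarrow> (nat \<Rightarrow> 'n) \<Rightarrow> nat \<Rightarrow> 'a" where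
  "tuple_prod x g k = (\<Prod>l<k. x $ g l)"

lemma finite_index_tuples [simp]: "finite (index_tuples k)"
  unfolding index_tuples_def by (intro finite_PiE) auto

lemma power_sum_index_tuples:
  fixes a :: "'n::finite \<Rightarrow> 'a::comm_semiring_1"
  shows "(\<Sum>j\<in>UNIV. a j) ^ k = (\<Sum>g\<in>index_tuples k. \<Prod>l<k. a (g l))"
proof -
  have "(\<Prod>l<k. \<Sum>j\<in>UNIV. a j) = (\<Sum>g\<in>index_tuples k. \<Prod>l<k. a (g l))"
    unfolding index_tuples_def by (rule prod_sum_PiE) auto
  then show ?thesis by (simp add: prod_constant)
qed

lemma inner_power_index_tuples:
  fixes p q :: "real^'n"
  shows "(inner p q) ^ k = (\<Sum>g\<in>index_tuples k. tuple_prod p g k * tuple_prod q g k)"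
  unfolding inner_vec_def tuple_prod_def power_sum_index_tuples by (simp add: prod.distrib)

definition gauss_weight :: "real^'n \<Rightarrow> real" where
  "gauss_weight p = exp (- (norm p)\<^sup>2 / 2)"

lemma gauss_kernel_factor:
  "gauss_kernel p q = gauss_weight p * gauss_weight q * exp (inner p q)"
proof -
  have "(norm (p - q))\<^sup>2 = (norm p)\<^sup>2 - 2 * inner p q + (norm q)\<^sup>2"
    by (simp add: power2_norm_eq_inner inner_diff inner_commute)
  then show ?thesis
    by (simp add: gauss_kernel_def gauss_weight_def flip: exp_add)
qed

definition feature_coeff :: "(real \<times> (real^'n::finite)) list \<Rightarrow> nat \<Rightarrow> (nat \<Rightarrow> 'n) \<Rightarrow> real" where
  "feature_coeff cs k g = (\<Sum>(c,p)\<leftarrow>cs. c * gauss_weight p * tuple_prod p g k)"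

lemma feature_coeff_Nil [simp]: "feature_coeff [] k g = 0"
  by (simp add: feature_coeff_def)

lemma feature_coeff_Cons [simp]:
  "feature_coeff (x # cs) k g = fst x * gauss_weight (snd x) * tuple_prod (snd x) g k + feature_coeff cs k g"
  by (simp add: feature_coeff_def split_def)

lemma pre_norm_sq_sums:
  "(\<lambda>k. (\<Sum>g\<in>index_tuples k. (feature_coeff cs k g)\<^sup>2) / fact k) sums pre_norm_sq cs"
proof -
  have series_term: "(\<lambda>k. c * d * (gauss_weight p * gauss_weight q * ((inner p q) ^ k / fact k)))
      sums (c * d * gauss_kernel p q)" for c d p q
  proof -
    have "(\<lambda>k. (inner p q) ^ k / fact k) sums exp (inner p q)"
      using exp_converges[of "inner p q"] by (simp add: divide_inverse mult.commute)
    then show ?thesis unfolding gauss_kernel_factor by (intro sums_mult)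
  qed
  have kth: "(\<Sum>(c,p)\<leftarrow>cs. \<Sum>(d,q)\<leftarrow>cs. c * d * (gauss_weight p * gauss_weight q * ((inner p q) ^ k / fact k)))
      = (\<Sum>g\<in>index_tuples k. (feature_coeff cs k g)\<^sup>2) / fact k" for k
  proof -
    have "(\<Sum>(c,p)\<leftarrow>cs. \<Sum>(d,q)\<leftarrow>cs. c * d * (gauss_weight p * gauss_weight q * ((inner p q) ^ k / fact k)))
       = (\<Sum>(c,p)\<leftarrow>cs. \<Sum>(d,q)\<leftarrow>cs. \<Sum>g\<in>index_tuples k.
            (c * gauss_weight p * tuple_prod p g k) * (d * gauss_weight q * tuple_prod q g k) / fact k)"
      by (simp add: inner_power_index_tuples sum_distrib_left sum_divide_distrib split_def algebra_simps)
    also have "\<dots> = (\<Sum>g\<in>index_tuples k. \<Sum>(c,p)\<leftarrow>cs. \<Sum>(d,q)\<leftarrow>cs.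
            (c * gauss_weight p * tuple_prod p g k) * (d * gauss_weight q * tuple_prod q g k) / fact k)"
      by (simp add: split_def sum_list_sum_swap)
    also have "\<dots> = (\<Sum>g\<in>index_tuples k. (feature_coeff cs k g)\<^sup>2 / fact k)"
      unfolding feature_coeff_def power2_eq_square sum_list_mult_sum_list
      by (simp add: split_def sum_list_divide_distrib)
    finally show ?thesis by (simp add: sum_divide_distrib)
  qed
  have "(\<lambda>k. \<Sum>(c,p)\<leftarrow>cs. \<Sum>(d,q)\<leftarrow>cs. c * d * (gauss_weight p * gauss_weight q * ((inner p q) ^ k / fact k)))
        sums (\<Sum>(c,p)\<leftarrow>cs. \<Sum>(d,q)\<leftarrow>cs. c * d * gauss_kernel p q)"
    unfolding split_def by (intro sums_sum_list) (use series_term in \<open>simp add: split_def\<close>)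
  then show ?thesis unfolding kth pre_norm_sq_def .
qed

lemma pre_norm_sq_nonneg: "pre_norm_sq cs \<ge> 0"
  by (rule sums_le[OF _ sums_zero pre_norm_sq_sums]) (auto intro!: divide_nonneg_pos sum_nonneg)

definition pre_norm :: "(real \<times> (real^'n::finite)) list \<Rightarrow> real" where
  "pre_norm a = sqrt (pre_norm_sq a)"

lemma pre_norm_nonneg: "pre_norm a \<ge> 0"
  using pre_norm_sq_nonneg[of a] by (simp add: pre_norm_def)

lemma pre_norm_power2: "(pre_norm a)\<^sup>2 = pre_norm_sq a"
  using pre_norm_sq_nonneg[of a] by (simp add: pre_norm_def)

lemma pre_inner_square_le: "(pre_inner a b)\<^sup>2 \<le> pre_norm_sq a * pre_norm_sq b"
proof -
  have quadratic: "0 \<le> pre_norm_sq a + 2 * t * pre_inner a b + t\<^sup>2 * pre_norm_sq b" for t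
  proof -
    have "0 \<le> pre_norm_sq (a @ pre_scale t b)" by (rule pre_norm_sq_nonneg)
    also have "\<dots> = pre_norm_sq a + 2 * t * pre_inner a b + t\<^sup>2 * pre_norm_sq b"
      unfolding pre_norm_sq_append
      unfolding pre_norm_sq_eq_pre_inner pre_inner_scale_left pre_inner_scale_right
      by (simp add: power2_eq_square algebra_simps)
    finally show ?thesis .
  qed
  show ?thesis
  proof (cases "pre_norm_sq b = 0")
    case True
    have "pre_inner a b = 0"
    proof (rule ccontr)
      assume "pre_inner a b \<noteq> 0"
      then have "2 * (- (pre_norm_sq a + 1) / (2 * pre_inner a b)) * pre_inner a b = - (pre_norm_sq a + 1)"
        by simp
      then show False using quadratic[of "- (pre_norm_sq a + 1) / (2 * pre_inner a b)"] True by simp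
    qed
    then show ?thesis using True by simp
  next
    case False
    then have pos: "pre_norm_sq b > 0" using pre_norm_sq_nonneg[of b] by simp
    have "0 \<le> pre_norm_sq a - (pre_inner a b)\<^sup>2 / pre_norm_sq b"
      using quadratic[of "- pre_inner a b / pre_norm_sq b"] pos
      by (simp add: power2_eq_square field_simps)
    then show ?thesis using pos by (simp add: field_simps)
  qed
qed

lemma abs_pre_inner_le: "\<bar>pre_inner a b\<bar> \<le> pre_norm a * pre_norm b"
proof -
  have "\<bar>pre_inner a b\<bar> = sqrt ((pre_inner a b)\<^sup>2)" by simp
  also have "\<dots> \<le> sqrt (pre_norm_sq a * pre_norm_sq b)"
    by (rule real_sqrt_le_mono[OF pre_inner_square_le])
  finally show ?thesis by (simp add: pre_norm_def real_sqrt_mult)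
qed

lemma pre_norm_append_le: "pre_norm (a @ b) \<le> pre_norm a + pre_norm b"
proof -
  have "pre_norm_sq (a @ b) \<le> (pre_norm a + pre_norm b)\<^sup>2"
    unfolding pre_norm_sq_append power2_sum pre_norm_power2
    using abs_pre_inner_le[of a b] by simp
  then show ?thesis using pre_norm_nonneg[of a] pre_norm_nonneg[of b]
    by (simp add: pre_norm_def real_sqrt_le_iff real_le_lsqrt)
qed

lemma pre_norm_eval_cong: "(\<And>z. pre_eval x z = pre_eval y z) \<Longrightarrow> pre_norm x = pre_norm y"
  unfolding pre_norm_def using pre_norm_sq_eval_cong by metis

lemma pre_norm_pre_diff_commute: "pre_norm (pre_diff a b) = pre_norm (pre_diff b a)"
proof -
  have "pre_norm (pre_diff b a) = pre_norm (pre_scale (-1) (pre_diff a b))"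
    by (rule pre_norm_eval_cong) simp
  also have "\<dots> = pre_norm (pre_diff a b)"
    unfolding pre_norm_def pre_norm_sq_eq_pre_inner pre_inner_scale_left pre_inner_scale_right
    by simp
  finally show ?thesis by simp
qed

lemma pre_norm_le_pre_diff: "pre_norm a \<le> pre_norm (pre_diff a b) + pre_norm b"
proof -
  have "pre_norm a = pre_norm (pre_diff a b @ b)" by (rule pre_norm_eval_cong) simp
  then show ?thesis using pre_norm_append_le[of "pre_diff a b" b] by simp
qed

lemma abs_pre_norm_diff_le: "\<bar>pre_norm a - pre_norm b\<bar> \<le> pre_norm (pre_diff a b)"
  using pre_norm_le_pre_diff[of a b] pre_norm_le_pre_diff[of b a] pre_norm_pre_diff_commute[of a b]
  by linarith

definition pre_Cauchy :: "(nat \<Rightarrow> (real \<times> (real^'n::finite)) list) \<Rightarrow> bool" where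
  "pre_Cauchy s \<longleftrightarrow> (\<forall>e>0. \<exists>N. \<forall>m\<ge>N. \<forall>k\<ge>N. pre_norm (pre_diff (s m) (s k)) < e)"

lemma approximates_pre_Cauchy:
  assumes "approximates s f"
  shows "pre_Cauchy s"
  unfolding pre_Cauchy_def
proof (intro allI impI)
  fix e :: real assume "e > 0"
  then obtain N where N: "\<forall>m\<ge>N. \<forall>k\<ge>N. pre_norm_sq (pre_diff (s m) (s k)) < e\<^sup>2"
    using assms unfolding approximates_def by (meson zero_less_power)
  then show "\<exists>N. \<forall>m\<ge>N. \<forall>k\<ge>N. pre_norm (pre_diff (s m) (s k)) < e"
    unfolding pre_norm_def using \<open>e > 0\<close> real_sqrt_less_iff[of _ "e\<^sup>2"] by auto
qed

lemma approximates_tendsto: "approximates s f \<Longrightarrow> (\<lambda>k. pre_eval (s k) x) \<longlonglongrightarrow> f x"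
  by (simp add: approximates_def)

lemma pre_Cauchy_pre_diff:
  assumes s: "pre_Cauchy s" and t: "pre_Cauchy t"
  shows "pre_Cauchy (\<lambda>k. pre_diff (s k) (t k))"
  unfolding pre_Cauchy_def
proof (intro allI impI)
  fix e :: real assume "e > 0"
  obtain N1 where N1: "\<And>m k. m \<ge> N1 \<Longrightarrow> k \<ge> N1 \<Longrightarrow> pre_norm (pre_diff (s m) (s k)) < e/2"
    using s \<open>e > 0\<close> unfolding pre_Cauchy_def by (meson half_gt_zero)
  obtain N2 where N2: "\<And>m k. m \<ge> N2 \<Longrightarrow> k \<ge> N2 \<Longrightarrow> pre_norm (pre_diff (t m) (t k)) < e/2"
    using t \<open>e > 0\<close> unfolding pre_Cauchy_def by (meson half_gt_zero)
  have "pre_norm (pre_diff (pre_diff (s m) (t m)) (pre_diff (s k) (t k))) < e"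
    if "m \<ge> max N1 N2" "k \<ge> max N1 N2" for m k
  proof -
    have "pre_norm (pre_diff (pre_diff (s m) (t m)) (pre_diff (s k) (t k)))
        = pre_norm (pre_diff (s m) (s k) @ pre_diff (t k) (t m))"
      by (rule pre_norm_eval_cong) simp
    also have "\<dots> \<le> pre_norm (pre_diff (s m) (s k)) + pre_norm (pre_diff (t k) (t m))"
      by (rule pre_norm_append_le)
    finally show ?thesis using N1[of m k] N2[of k m] that by simp
  qed
  then show "\<exists>N. \<forall>m\<ge>N. \<forall>k\<ge>N. pre_norm (pre_diff (pre_diff (s m) (t m)) (pre_diff (s k) (t k))) < e"
    by blast
qed

text \<open>Since \<open>\<langle>d\<^sub>k, d\<^sub>m\<rangle> = \<Sum> c \<cdot> d\<^sub>m(p)\<close> tends to \<open>0\<close> as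
  \<open>m \<rightarrow> \<infinity>\<close>, the identity \<open>\<parallel>d\<^sub>k\<parallel>\<^sup>2 = \<langle>d\<^sub>k, d\<^sub>k - d\<^sub>m\<rangle> + \<langle>d\<^sub>k, d\<^sub>m\<rangle>\<close> gives \<open>\<parallel>d\<^sub>k\<parallel> \<le> e\<close>
  once \<open>d\<close> is \<open>e\<close>-Cauchy beyond \<open>k\<close>.\<close>

lemma pre_norm_tendsto_zero:
  assumes d: "pre_Cauchy d" and lim: "\<And>x. (\<lambda>k. pre_eval (d k) x) \<longlonglongrightarrow> 0"
  shows "(\<lambda>k. pre_norm (d k)) \<longlonglongrightarrow> 0"
proof (rule LIMSEQ_I)
  fix r :: real assume "r > 0"
  then obtain N where N: "\<And>m k. m \<ge> N \<Longrightarrow> k \<ge> N \<Longrightarrow> pre_norm (pre_diff (d m) (d k)) < r/2"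
    using d unfolding pre_Cauchy_def by (meson half_gt_zero)
  have small: "pre_norm (d k) \<le> r/2" if "k \<ge> N" for k
  proof -
    have inner_lim: "(\<lambda>m. pre_inner (d k) (d m)) \<longlonglongrightarrow> 0"
    proof -
      have "(\<lambda>m. \<Sum>x\<leftarrow>d k. fst x * pre_eval (d m) (snd x)) \<longlonglongrightarrow> (\<Sum>x\<leftarrow>d k. fst x * 0)"
        by (intro tendsto_sum_list tendsto_mult tendsto_const lim)
      then show ?thesis by (simp add: pre_inner_def split_def)
    qed
    have "pre_norm_sq (d k) \<le> pre_norm (d k) * (r/2) + \<bar>pre_inner (d k) (d m)\<bar>" if "m \<ge> N" for m
    proof -
      have "pre_norm_sq (d k) = pre_inner (d k) (pre_diff (d k) (d m)) + pre_inner (d k) (d m)"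
        by (simp add: pre_norm_sq_eq_pre_inner pre_inner_diff_right)
      moreover have "\<bar>pre_inner (d k) (pre_diff (d k) (d m))\<bar> \<le> pre_norm (d k) * (r/2)"
        using abs_pre_inner_le[of "d k" "pre_diff (d k) (d m)"] N[of k m] that \<open>k \<ge> N\<close>
          pre_norm_nonneg[of "d k"]
        by (smt (verit, best) mult_left_mono)
      ultimately show ?thesis by linarith
    qed
    moreover have "(\<lambda>m. pre_norm (d k) * (r/2) + \<bar>pre_inner (d k) (d m)\<bar>) \<longlonglongrightarrow> pre_norm (d k) * (r/2) + \<bar>0\<bar>"
      by (intro tendsto_add tendsto_const tendsto_rabs inner_lim)
    ultimately have "(pre_norm (d k))\<^sup>2 \<le> pre_norm (d k) * (r/2)"
      unfolding pre_norm_power2 by (intro LIMSEQ_le_const) auto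
    then show ?thesis using pre_norm_nonneg[of "d k"] \<open>r > 0\<close>
      by (cases "pre_norm (d k) = 0") (auto simp: power2_eq_square)
  qed
  have "norm (pre_norm (d k) - 0) < r" if "k \<ge> N" for k
    using small[OF that] pre_norm_nonneg[of "d k"] \<open>r > 0\<close> by simp
  then show "\<exists>N. \<forall>k\<ge>N. norm (pre_norm (d k) - 0) < r" by blast
qed

lemma native_norm_tendsto:
  assumes s: "approximates s f"
  shows "(\<lambda>k. pre_norm (s k)) \<longlonglongrightarrow> native_norm f"
proof -
  have "Cauchy (\<lambda>k. pre_norm (s k))"
    unfolding Cauchy_def dist_real_def
    using approximates_pre_Cauchy[OF s] abs_pre_norm_diff_le
    unfolding pre_Cauchy_def by (meson le_less_trans)
  then obtain r where r: "(\<lambda>k. pre_norm (s k)) \<longlonglongrightarrow> r"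
    by (auto simp: Cauchy_convergent_iff convergent_def)
  have same_limit: "(\<lambda>k. pre_norm (t k)) \<longlonglongrightarrow> r" if t: "approximates t f" for t
  proof -
    have "(\<lambda>k. pre_norm (pre_diff (s k) (t k))) \<longlonglongrightarrow> 0"
    proof (intro pre_norm_tendsto_zero pre_Cauchy_pre_diff approximates_pre_Cauchy[OF s]
        approximates_pre_Cauchy[OF t])
      fix x
      show "(\<lambda>k. pre_eval (pre_diff (s k) (t k)) x) \<longlonglongrightarrow> 0"
        using tendsto_diff[OF approximates_tendsto[OF s, of x] approximates_tendsto[OF t, of x]] by simp
    qed
    then have "(\<lambda>k. pre_norm (s k) - pre_norm (t k)) \<longlonglongrightarrow> 0"
      by (rule Lim_null_comparison[rotated]) (simp add: abs_pre_norm_diff_le always_eventually)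
    from tendsto_diff[OF r this] show ?thesis by simp
  qed
  have "native_norm f = r"
    unfolding native_norm_def
  proof (rule the_equality)
    show "\<forall>s. approximates s f \<longrightarrow> (\<lambda>k. sqrt (pre_norm_sq (s k))) \<longlonglongrightarrow> r"
      using same_limit by (simp add: pre_norm_def)
    show "r' = r" if "\<forall>s. approximates s f \<longrightarrow> (\<lambda>k. sqrt (pre_norm_sq (s k))) \<longlonglongrightarrow> r'" for r'
      using that s r LIMSEQ_unique by (fastforce simp: pre_norm_def)
  qed
  then show ?thesis using r by simp
qed

lemma gauss_kernel_section_approximates: "approximates (\<lambda>_. [(1,a)]) (\<lambda>y. gauss_kernel y a)"
  unfolding approximates_def by (simp add: pre_norm_sq_def pre_diff_def pre_eval_def)

lemma gauss_kernel_section_native: "(\<lambda>y. gauss_kernel y a) \<in> native_space"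
  unfolding native_space_def using gauss_kernel_section_approximates by blast

lemma native_norm_gauss_kernel_section: "native_norm (\<lambda>y. gauss_kernel y a) = 1"
proof -
  have "pre_norm [(1,a)] = 1" by (simp add: pre_norm_def pre_norm_sq_def)
  then have "(\<lambda>k. 1) \<longlonglongrightarrow> native_norm (\<lambda>y. gauss_kernel y a)"
    using native_norm_tendsto[OF gauss_kernel_section_approximates[of a]] by simp
  then show ?thesis by (rule LIMSEQ_unique[OF tendsto_const, symmetric])
qed

section \<open>Kernel expansions on \<open>\<complex>\<^sup>n\<close>\<close>

definition complex_vec :: "real^'n \<Rightarrow> complex^'n" where
  "complex_vec x = (\<chi> i. complex_of_real (x $ i))"

definition gauss_kernel_complex :: "complex^'n::finite \<Rightarrow> real^'n \<Rightarrow> complex" where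
  "gauss_kernel_complex z p = exp (- (\<Sum>j\<in>UNIV. (z $ j - complex_of_real (p $ j))\<^sup>2) / 2)"

definition pre_eval_complex :: "(real \<times> (real^'n::finite)) list \<Rightarrow> complex^'n \<Rightarrow> complex" where
  "pre_eval_complex cs z = (\<Sum>(c,p)\<leftarrow>cs. complex_of_real c * gauss_kernel_complex z p)"

definition gauss_weight_complex :: "complex^'n::finite \<Rightarrow> complex" where
  "gauss_weight_complex z = exp (- (\<Sum>j\<in>UNIV. (z $ j)\<^sup>2) / 2)"

lemma norm_power2_vec: "(norm (p::real^'n::finite))\<^sup>2 = (\<Sum>j\<in>UNIV. (p $ j)\<^sup>2)"
  unfolding power2_norm_eq_inner inner_vec_def by (simp add: power2_eq_square)

lemma gauss_kernel_complex_factor: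
  "gauss_kernel_complex z p = gauss_weight_complex z * complex_of_real (gauss_weight p)
     * exp (\<Sum>j\<in>UNIV. z $ j * complex_of_real (p $ j))"
proof -
  have exponent: "- (\<Sum>j\<in>UNIV. (z $ j - complex_of_real (p $ j))\<^sup>2) / 2 =
     - (\<Sum>j\<in>UNIV. (z $ j)\<^sup>2) / 2 + complex_of_real (- (norm p)\<^sup>2 / 2)
       + (\<Sum>j\<in>UNIV. z $ j * complex_of_real (p $ j))"
    unfolding norm_power2_vec power2_diff
    by (simp add: sum.distrib sum_subtractf sum_distrib_left field_simps)
  show ?thesis
    unfolding gauss_kernel_complex_def gauss_weight_complex_def gauss_weight_def exponent exp_add
      of_real_exp
    by simp
qed

lemma gauss_kernel_complex_of_real:
  "gauss_kernel_complex (complex_vec x) p = complex_of_real (gauss_kernel x p)"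
proof -
  have "(\<Sum>j\<in>UNIV. (complex_vec x $ j - complex_of_real (p $ j))\<^sup>2) = complex_of_real ((norm (x - p))\<^sup>2)"
    unfolding norm_power2_vec by (simp add: complex_vec_def)
  then show ?thesis by (simp add: gauss_kernel_complex_def gauss_kernel_def of_real_exp)
qed

lemma pre_eval_complex_of_real:
  "pre_eval_complex cs (complex_vec x) = complex_of_real (pre_eval cs x)"
  unfolding pre_eval_complex_def pre_eval_def gauss_kernel_complex_of_real
  by (induction cs) auto

lemma pre_eval_complex_diff:
  "pre_eval_complex (pre_diff a b) z = pre_eval_complex a z - pre_eval_complex b z"
proof -
  have "pre_eval_complex (map (\<lambda>(c,p). (- c, p)) b) z = - pre_eval_complex b z"
    unfolding pre_eval_complex_def by (induction b) auto
  then show ?thesis by (simp add: pre_diff_def pre_eval_complex_def)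
qed

lemma exp_sum_index_tuples_sums:
  "(\<lambda>k. (\<Sum>g\<in>index_tuples k. tuple_prod z g k * complex_of_real (tuple_prod p g k)) / fact k)
     sums exp (\<Sum>j\<in>UNIV. z $ j * complex_of_real (p $ j))"
proof -
  have "(\<Sum>j\<in>UNIV. z $ j * complex_of_real (p $ j)) ^ k /\<^sub>R fact k =
     (\<Sum>g\<in>index_tuples k. tuple_prod z g k * complex_of_real (tuple_prod p g k)) / fact k" for k
    unfolding power_sum_index_tuples tuple_prod_def
    by (simp add: prod.distrib scaleR_conv_of_real divide_inverse mult.commute)
  then show ?thesis using exp_converges[of "\<Sum>j\<in>UNIV. z $ j * complex_of_real (p $ j)"] by simp
qed

definition feature_series :: "(real \<times> (real^'n::finite)) list \<Rightarrow> complex^'n \<Rightarrow> nat \<Rightarrow> complex" where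
  "feature_series cs z k = (\<Sum>g\<in>index_tuples k. tuple_prod z g k * complex_of_real (feature_coeff cs k g)) / fact k"

lemma pre_eval_complex_sums:
  "feature_series cs z
     sums (pre_eval_complex cs z / gauss_weight_complex z)"
proof -
  have "(\<lambda>k. \<Sum>x\<leftarrow>cs. complex_of_real (fst x) * complex_of_real (gauss_weight (snd x)) *
        ((\<Sum>g\<in>index_tuples k. tuple_prod z g k * complex_of_real (tuple_prod (snd x) g k)) / fact k))
     sums (\<Sum>x\<leftarrow>cs. complex_of_real (fst x) * complex_of_real (gauss_weight (snd x)) *
         exp (\<Sum>j\<in>UNIV. z $ j * complex_of_real (snd x $ j)))"
    by (intro sums_sum_list sums_mult exp_sum_index_tuples_sums)
  moreover have "(\<Sum>x\<leftarrow>cs. complex_of_real (fst x) * complex_of_real (gauss_weight (snd x)) *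
        ((\<Sum>g\<in>index_tuples k. tuple_prod z g k * complex_of_real (tuple_prod (snd x) g k)) / fact k))
     = feature_series cs z k" for k
    unfolding feature_series_def by (induction cs)
      (simp_all add: sum.distrib distrib_left add_divide_distrib sum_divide_distrib
        sum_distrib_left algebra_simps)
  moreover have "(\<Sum>x\<leftarrow>cs. complex_of_real (fst x) * complex_of_real (gauss_weight (snd x)) *
         exp (\<Sum>j\<in>UNIV. z $ j * complex_of_real (snd x $ j))) = pre_eval_complex cs z / gauss_weight_complex z"
    unfolding pre_eval_complex_def gauss_kernel_complex_factor
    by (induction cs) (auto simp: split_def field_simps gauss_weight_complex_def)
  ultimately show ?thesis by simp
qed

lemma sum_norm_tuple_prod_power2:
  "(\<Sum>g\<in>index_tuples k. (cmod (tuple_prod z g k))\<^sup>2) = (\<Sum>j\<in>UNIV. (cmod (z $ j))\<^sup>2) ^ k"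
  unfolding power_sum_index_tuples tuple_prod_def by (simp add: prod_norm[symmetric] prod_power_distrib)

text \<open>Cauchy-Schwarz in the feature space, with the weights \<open>1/k!\<close> split evenly between the
  two factors.\<close>

lemma norm_feature_partial_sum_le:
  "(cmod (\<Sum>k<N. feature_series cs z k))\<^sup>2 \<le> exp (\<Sum>j\<in>UNIV. (cmod (z $ j))\<^sup>2) * pre_norm_sq cs"
proof -
  define A where "A = Sigma {..<N} (\<lambda>k. index_tuples k :: (nat \<Rightarrow> 'a) set)"
  define a where "a = (\<lambda>(k,g). cmod (tuple_prod z g k) / sqrt (fact k))"
  define b where "b = (\<lambda>(k,g). \<bar>feature_coeff cs k g\<bar> / sqrt (fact k))"
  have sqrt_div_sqrt: "(x / sqrt (fact k)) * (y / sqrt (fact k)) = x * y / (fact k :: real)" for x y k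
    by (simp add: real_sqrt_mult_self)
  have "cmod (\<Sum>k<N. feature_series cs z k)
      \<le> (\<Sum>k<N. \<Sum>g\<in>index_tuples k. cmod (tuple_prod z g k * complex_of_real (feature_coeff cs k g) / fact k))"
    unfolding feature_series_def
    by (simp add: sum_divide_distrib) (intro order_trans[OF norm_sum] sum_mono norm_sum)
  also have "\<dots> = (\<Sum>x\<in>A. a x * b x)"
    unfolding A_def a_def b_def
    by (subst sum.Sigma) (auto simp: norm_mult norm_divide sqrt_div_sqrt intro: sum.cong)
  finally have le_ab: "cmod (\<Sum>k<N. feature_series cs z k) \<le> (\<Sum>x\<in>A. a x * b x)" .
  have "(\<Sum>x\<in>A. (a x)\<^sup>2) = (\<Sum>k<N. \<Sum>g\<in>index_tuples k. (cmod (tuple_prod z g k))\<^sup>2 / fact k)"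
    unfolding A_def a_def by (subst sum.Sigma) (auto simp: power_divide intro!: sum.cong)
  also have "\<dots> = (\<Sum>k<N. (\<Sum>j\<in>UNIV. (cmod (z $ j))\<^sup>2) ^ k / fact k)"
    by (simp add: sum_divide_distrib[symmetric] sum_norm_tuple_prod_power2)
  also have "\<dots> \<le> exp (\<Sum>j\<in>UNIV. (cmod (z $ j))\<^sup>2)"
    using exp_converges[of "\<Sum>j\<in>UNIV. (cmod (z $ j))\<^sup>2"]
    by (intro sum_lessThan_le_sums)
      (auto simp: divide_inverse mult.commute intro!: mult_nonneg_nonneg zero_le_power sum_nonneg)
  finally have a_le: "(\<Sum>x\<in>A. (a x)\<^sup>2) \<le> exp (\<Sum>j\<in>UNIV. (cmod (z $ j))\<^sup>2)" .
  have "(\<Sum>x\<in>A. (b x)\<^sup>2) = (\<Sum>k<N. \<Sum>g\<in>index_tuples k. (feature_coeff cs k g)\<^sup>2 / fact k)"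
    unfolding A_def b_def by (subst sum.Sigma) (auto simp: power_divide intro!: sum.cong)
  also have "\<dots> = (\<Sum>k<N. (\<Sum>g\<in>index_tuples k. (feature_coeff cs k g)\<^sup>2) / fact k)"
    by (simp add: sum_divide_distrib[symmetric])
  also have "\<dots> \<le> pre_norm_sq cs"
    by (intro sum_lessThan_le_sums pre_norm_sq_sums divide_nonneg_pos sum_nonneg) auto
  finally have b_le: "(\<Sum>x\<in>A. (b x)\<^sup>2) \<le> pre_norm_sq cs" .
  have "(\<Sum>x\<in>A. a x * b x)\<^sup>2 \<le> (\<Sum>x\<in>A. (a x)\<^sup>2) * (\<Sum>x\<in>A. (b x)\<^sup>2)"
    by (rule Cauchy_Schwarz_ineq_sum)
  also have "\<dots> \<le> exp (\<Sum>j\<in>UNIV. (cmod (z $ j))\<^sup>2) * pre_norm_sq cs"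
    using a_le b_le by (intro mult_mono) (auto intro!: sum_nonneg)
  finally show ?thesis
    using power_mono[OF le_ab norm_ge_zero, of 2] by linarith
qed

lemma norm_pre_eval_complex_le:
  "cmod (pre_eval_complex cs z) \<le> pre_norm cs * exp (\<Sum>j\<in>UNIV. (Im (z $ j))\<^sup>2)"
proof -
  define S where "S = pre_eval_complex cs z / gauss_weight_complex z"
  define E where "E = exp (\<Sum>j\<in>UNIV. (cmod (z $ j))\<^sup>2)"
  have "(\<lambda>N. (cmod (\<Sum>k<N. feature_series cs z k))\<^sup>2) \<longlonglongrightarrow> (cmod S)\<^sup>2"
    using pre_eval_complex_sums[of cs z] unfolding S_def sums_def by (intro tendsto_intros)
  then have S: "(cmod S)\<^sup>2 \<le> E * pre_norm_sq cs"
    by (rule LIMSEQ_le_const2) (use norm_feature_partial_sum_le E_def in auto)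
  have weight: "(cmod (gauss_weight_complex z))\<^sup>2 * E = exp (2 * (\<Sum>j\<in>UNIV. (Im (z $ j))\<^sup>2))"
  proof -
    have "(cmod (gauss_weight_complex z))\<^sup>2 = exp (- (\<Sum>j\<in>UNIV. Re ((z $ j)\<^sup>2)))"
      by (simp add: gauss_weight_complex_def norm_exp_eq_Re Re_sum power2_eq_square flip: exp_add)
    then have "(cmod (gauss_weight_complex z))\<^sup>2 * E = exp (\<Sum>j\<in>UNIV. (cmod (z $ j))\<^sup>2 - Re ((z $ j)\<^sup>2))"
      by (simp add: E_def sum_subtractf flip: exp_add)
    also have "(\<Sum>j\<in>UNIV. (cmod (z $ j))\<^sup>2 - Re ((z $ j)\<^sup>2)) = 2 * (\<Sum>j\<in>UNIV. (Im (z $ j))\<^sup>2)"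
      by (simp add: cmod_power2 Re_power2 sum_distrib_left)
    finally show ?thesis .
  qed
  have "(cmod (pre_eval_complex cs z))\<^sup>2 = (cmod (gauss_weight_complex z))\<^sup>2 * (cmod S)\<^sup>2"
    by (simp add: S_def norm_divide power_divide gauss_weight_complex_def)
  also have "\<dots> \<le> (cmod (gauss_weight_complex z))\<^sup>2 * (E * pre_norm_sq cs)"
    by (rule mult_left_mono[OF S]) simp
  also have "\<dots> = (pre_norm cs * exp (\<Sum>j\<in>UNIV. (Im (z $ j))\<^sup>2))\<^sup>2"
    unfolding mult.assoc[symmetric] weight by (simp add: power_mult_distrib pre_norm_power2 exp_double)
  finally show ?thesis
    by (rule power2_le_imp_le) (simp add: pre_norm_nonneg)
qed

section \<open>Entire extensions along complex lines\<close>

definition complex_line :: "real^'n \<Rightarrow> real^'n \<Rightarrow> complex \<Rightarrow> complex^'n" where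
  "complex_line x v w = complex_vec x + w *s complex_vec v"

lemma complex_line_nth [simp]:
  "complex_line x v w $ j = complex_of_real (x $ j) + w * complex_of_real (v $ j)"
  by (simp add: complex_line_def complex_vec_def)

lemma complex_line_of_real: "complex_line x v (complex_of_real t) = complex_vec (x + t *\<^sub>R v)"
  by (simp add: complex_vec_def vec_eq_iff)

lemma sum_Im_complex_line:
  "(\<Sum>j\<in>UNIV. (Im (complex_line x v w $ j))\<^sup>2) = (Im w)\<^sup>2 * (norm v)\<^sup>2"
  by (simp add: norm_power2_vec power_mult_distrib sum_distrib_left)

lemma holomorphic_on_pre_eval_complex_line:
  "(\<lambda>w. pre_eval_complex cs (complex_line x v w)) holomorphic_on UNIV"
proof (induction cs)
  case Nil
  then show ?case by (simp add: pre_eval_complex_def)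
next
  case (Cons a cs)
  have "(\<lambda>w. pre_eval_complex (a # cs) (complex_line x v w)) = (\<lambda>w. complex_of_real (fst a) *
      exp (- (\<Sum>j\<in>UNIV. (complex_of_real (x $ j) + w * complex_of_real (v $ j)
        - complex_of_real (snd a $ j))\<^sup>2) / 2) + pre_eval_complex cs (complex_line x v w))"
    by (simp add: pre_eval_complex_def gauss_kernel_complex_def split_def)
  then show ?case by (auto intro!: holomorphic_intros Cons)
qed

lemma uniformly_Cauchy_on_pre_eval_complex_line:
  assumes s: "pre_Cauchy s"
  shows "uniformly_Cauchy_on (cball 0 r) (\<lambda>k w. pre_eval_complex (s k) (complex_line x v w))"
proof (rule uniformly_Cauchy_onI)
  fix e :: real assume "e > 0"
  define B where "B = exp (r\<^sup>2 * (norm v)\<^sup>2)"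
  have "B > 0" by (simp add: B_def)
  then obtain N where N: "\<And>m k. m \<ge> N \<Longrightarrow> k \<ge> N \<Longrightarrow> pre_norm (pre_diff (s m) (s k)) < e / B"
    using s \<open>e > 0\<close> unfolding pre_Cauchy_def by (meson divide_pos_pos)
  have "dist (pre_eval_complex (s m) (complex_line x v w)) (pre_eval_complex (s k) (complex_line x v w)) < e"
    if w: "w \<in> cball 0 r" and "m \<ge> N" "k \<ge> N" for w m k
  proof -
    have "(Im w)\<^sup>2 \<le> r\<^sup>2"
      using w abs_Im_le_cmod[of w] by (intro power2_le_iff_abs_le[THEN iffD2]) auto
    then have bound: "exp ((Im w)\<^sup>2 * (norm v)\<^sup>2) \<le> B"
      unfolding B_def by (intro exp_mono mult_right_mono) auto
    have "dist (pre_eval_complex (s m) (complex_line x v w)) (pre_eval_complex (s k) (complex_line x v w))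
        = cmod (pre_eval_complex (pre_diff (s m) (s k)) (complex_line x v w))"
      by (simp add: dist_norm pre_eval_complex_diff)
    also have "\<dots> \<le> pre_norm (pre_diff (s m) (s k)) * exp ((Im w)\<^sup>2 * (norm v)\<^sup>2)"
      by (metis norm_pre_eval_complex_le sum_Im_complex_line)
    also have "\<dots> \<le> pre_norm (pre_diff (s m) (s k)) * B"
      by (rule mult_left_mono[OF bound pre_norm_nonneg])
    also have "\<dots> < e"
      using N[OF \<open>m \<ge> N\<close> \<open>k \<ge> N\<close>] \<open>B > 0\<close> by (simp add: pos_less_divide_eq)
    finally show ?thesis .
  qed
  then show "\<exists>N. \<forall>w\<in>cball 0 r. \<forall>m\<ge>N. \<forall>k\<ge>N.
      dist (pre_eval_complex (s m) (complex_line x v w)) (pre_eval_complex (s k) (complex_line x v w)) < e"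
    by blast
qed

lemma native_space_complex_line_extension:
  assumes s: "approximates s f"
  obtains L where "L holomorphic_on UNIV"
    and "\<And>t. L (complex_of_real t) = complex_of_real (f (x + t *\<^sub>R v))"
    and "\<And>w. cmod (L w) \<le> native_norm f * exp ((Im w)\<^sup>2 * (norm v)\<^sup>2)"
proof -
  define S where "S k w = pre_eval_complex (s k) (complex_line x v w)" for k w
  define L where "L w = lim (\<lambda>k. S k w)" for w
  have uniform: "uniform_limit (cball 0 r) S L sequentially" for r
    using Cauchy_uniformly_convergent[OF uniformly_Cauchy_on_pre_eval_complex_line[OF
        approximates_pre_Cauchy[OF s]]]
    unfolding uniformly_convergent_uniform_limit_iff L_def S_def .
  have pointwise: "(\<lambda>k. S k w) \<longlonglongrightarrow> L w" for w
    by (rule tendsto_uniform_limitI[OF uniform[of "cmod w"]]) simp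
  have "L holomorphic_on UNIV"
    using holomorphic_on_pre_eval_complex_line uniform
    unfolding S_def by (rule holomorphic_on_uniform_limit_UNIV)
  moreover have "L (complex_of_real t) = complex_of_real (f (x + t *\<^sub>R v))" for t
  proof -
    have "(\<lambda>k. S k (complex_of_real t)) \<longlonglongrightarrow> complex_of_real (f (x + t *\<^sub>R v))"
      using tendsto_of_real[OF approximates_tendsto[OF s]]
      by (simp add: S_def complex_line_of_real pre_eval_complex_of_real)
    with pointwise show ?thesis using LIMSEQ_unique by blast
  qed
  moreover have "cmod (L w) \<le> native_norm f * exp ((Im w)\<^sup>2 * (norm v)\<^sup>2)" for w
  proof (rule tendsto_le[OF trivial_limit_sequentially])
    show "(\<lambda>k. pre_norm (s k) * exp ((Im w)\<^sup>2 * (norm v)\<^sup>2))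
        \<longlonglongrightarrow> native_norm f * exp ((Im w)\<^sup>2 * (norm v)\<^sup>2)"
      by (intro tendsto_mult tendsto_const native_norm_tendsto[OF s])
    show "(\<lambda>k. cmod (S k w)) \<longlonglongrightarrow> cmod (L w)" by (intro tendsto_norm pointwise)
    show "\<forall>\<^sub>F k in sequentially. cmod (S k w) \<le> pre_norm (s k) * exp ((Im w)\<^sup>2 * (norm v)\<^sup>2)"
      unfolding S_def by (intro always_eventually allI) (metis norm_pre_eval_complex_le sum_Im_complex_line)
  qed
  ultimately show ?thesis using that by blast
qed

lemma holomorphic_on_entire_map_line:
  fixes G :: "complex^'n::finite \<Rightarrow> complex^'m::finite"
  assumes "entire_map G"
  shows "(\<lambda>w. G (complex_line x v w) $ j) holomorphic_on UNIV"
  unfolding holomorphic_on_def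
proof
  fix w :: complex
  obtain L where G': "(G has_derivative L) (at (complex_line x v w))"
    and L: "\<And>c u. L (c *s u) = c *s L u"
    using assms unfolding entire_map_def by blast
  have "bounded_linear (\<lambda>h::complex. h *s complex_vec v)"
    by (intro linear_conv_bounded_linear[THEN iffD1] linearI) (simp_all add: vec_eq_iff algebra_simps)
  then have "(complex_line x v has_derivative (\<lambda>h. h *s complex_vec v)) (at w)"
    unfolding complex_line_def
    by (intro has_derivative_add_const[where f="\<lambda>w. w *s complex_vec v", simplified add.commute]
        bounded_linear_imp_has_derivative)
  from bounded_linear.has_derivative[OF bounded_linear_vec_nth diff_chain_at[OF this G']]
  have "((\<lambda>w. G (complex_line x v w) $ j) has_derivative (\<lambda>h. L (complex_vec v) $ j * h)) (at w)"
    by (simp add: o_def L mult.commute)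
  then show "(\<lambda>w. G (complex_line x v w) $ j) field_differentiable at w within UNIV"
    unfolding field_differentiable_def has_field_derivative_def by blast
qed

lemma norm_gauss_kernel_complex_Re:
  "cmod (gauss_kernel_complex z (\<chi> j. Re (z $ j))) = exp ((\<Sum>j\<in>UNIV. (Im (z $ j))\<^sup>2) / 2)"
proof -
  have "(z $ j - complex_of_real ((\<chi> j. Re (z $ j)) $ j))\<^sup>2 = - complex_of_real ((Im (z $ j))\<^sup>2)" for j
    by (simp add: complex_eq_iff power2_eq_square)
  then have "gauss_kernel_complex z (\<chi> j. Re (z $ j))
      = exp (complex_of_real ((\<Sum>j\<in>UNIV. (Im (z $ j))\<^sup>2) / 2))"
    by (simp add: gauss_kernel_complex_def sum_negf)
  then show ?thesis by (simp only: norm_exp_eq_Re Re_complex_of_real)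
qed

lemma koopman_bounded_gauss_kernel_section:
  assumes "koopman_bounded F"
  obtains M where "M \<ge> 1"
    and "\<And>a. (\<lambda>y. gauss_kernel y a) \<circ> F \<in> native_space"
    and "\<And>a. native_norm ((\<lambda>y. gauss_kernel y a) \<circ> F) \<le> M"
proof -
  obtain C where native: "\<And>g. g \<in> native_space \<Longrightarrow> g \<circ> F \<in> native_space"
    and norm_le: "\<And>g. g \<in> native_space \<Longrightarrow> native_norm (g \<circ> F) \<le> C * native_norm g"
    using assms unfolding koopman_bounded_def by blast
  have "native_norm ((\<lambda>y. gauss_kernel y a) \<circ> F) \<le> max C 1" for a
    using norm_le[OF gauss_kernel_section_native[of a]]
    by (simp add: native_norm_gauss_kernel_section)
  then show ?thesis
    using that[of "max C 1"] native[OF gauss_kernel_section_native] by simp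
qed

lemma sum_Im_entire_extension_le:
  fixes F :: "real^'n::finite \<Rightarrow> real^'n" and G :: "complex^'n \<Rightarrow> complex^'n"
  assumes G: "entire_map G" and G_ext: "\<And>x. G (complex_vec x) = complex_vec (F x)"
    and F: "koopman_bounded F"
  obtains D where "D \<ge> 0"
    and "\<And>x v w. (\<Sum>j\<in>UNIV. (Im (G (complex_line x v w) $ j))\<^sup>2) \<le> D + 2 * ((Im w)\<^sup>2 * (norm v)\<^sup>2)"
proof -
  obtain M where M: "M \<ge> 1"
    and native: "\<And>a. (\<lambda>y. gauss_kernel y a) \<circ> F \<in> native_space"
    and norm_le: "\<And>a. native_norm ((\<lambda>y. gauss_kernel y a) \<circ> F) \<le> M"
    using koopman_bounded_gauss_kernel_section[OF F] by blast
  have "(\<Sum>j\<in>UNIV. (Im (G (complex_line x v w) $ j))\<^sup>2) \<le> 2 * ln M + 2 * ((Im w)\<^sup>2 * (norm v)\<^sup>2)"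
    for x v :: "real^'n" and w :: complex
  proof -
    define a where "a = (\<chi> j. Re (G (complex_line x v w) $ j))"
    obtain s where s: "approximates s ((\<lambda>y. gauss_kernel y a) \<circ> F)"
      using native[of a] unfolding native_space_def by blast
    obtain L where L_holo: "L holomorphic_on UNIV"
      and L_real: "\<And>t. L (complex_of_real t) = complex_of_real (gauss_kernel (F (x + t *\<^sub>R v)) a)"
      and L_le: "\<And>w. cmod (L w) \<le> native_norm ((\<lambda>y. gauss_kernel y a) \<circ> F) * exp ((Im w)\<^sup>2 * (norm v)\<^sup>2)"
      using native_space_complex_line_extension[OF s, of x v] by auto
    have "(\<lambda>u. gauss_kernel_complex (G (complex_line x v u)) a) holomorphic_on UNIV"
      unfolding gauss_kernel_complex_def
      by (intro holomorphic_intros holomorphic_on_entire_map_line[OF G]) auto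
    then have "gauss_kernel_complex (G (complex_line x v w)) a = L w"
      using L_holo
      by (rule entire_eq_if_eq_on_reals)
        (simp add: L_real complex_line_of_real G_ext gauss_kernel_complex_of_real)
    then have "exp ((\<Sum>j\<in>UNIV. (Im (G (complex_line x v w) $ j))\<^sup>2) / 2) = cmod (L w)"
      using norm_gauss_kernel_complex_Re unfolding a_def by metis
    also have "\<dots> \<le> M * exp ((Im w)\<^sup>2 * (norm v)\<^sup>2)"
      using L_le[of w] norm_le[of a] by (meson exp_ge_zero mult_right_mono order_trans)
    also have "\<dots> = exp (ln M + (Im w)\<^sup>2 * (norm v)\<^sup>2)"
      using M by (simp add: exp_add)
    finally show ?thesis by simp
  qed
  moreover have "2 * ln M \<ge> 0" using M by simp
  ultimately show ?thesis using that by blast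
qed

lemma abs_le_sqrt_add_if_power2_le:
  fixes x P Q :: real
  assumes "x\<^sup>2 \<le> P + Q\<^sup>2" "P \<ge> 0" "Q \<ge> 0"
  shows "\<bar>x\<bar> \<le> sqrt P + Q"
proof (rule power2_le_imp_le)
  have "\<bar>x\<bar>\<^sup>2 \<le> P + Q\<^sup>2 + 2 * sqrt P * Q"
    using assms by (simp add: add_increasing2)
  also have "\<dots> = (sqrt P + Q)\<^sup>2" using assms(2) by (simp add: power2_sum)
  finally show "\<bar>x\<bar>\<^sup>2 \<le> (sqrt P + Q)\<^sup>2" .
qed (use assms in simp)

lemma abs_Im_nth_le:
  fixes z :: "complex^'n::finite"
  assumes "(\<Sum>j\<in>UNIV. (Im (z $ j))\<^sup>2) \<le> D + 2 * ((Im u)\<^sup>2 * c\<^sup>2)" and "D \<ge> 0" and "c \<ge> 0"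
  shows "\<bar>Im (z $ j)\<bar> \<le> sqrt 2 * c * cmod u + sqrt D"
proof -
  have "(Im u)\<^sup>2 \<le> (cmod u)\<^sup>2"
    using abs_Im_le_cmod[of u] by (metis abs_ge_zero power2_abs power_mono)
  then have "2 * ((Im u)\<^sup>2 * c\<^sup>2) \<le> (sqrt 2 * c * cmod u)\<^sup>2"
    using mult_right_mono[of "(Im u)\<^sup>2" "(cmod u)\<^sup>2" "c\<^sup>2"] by (simp add: power_mult_distrib algebra_simps)
  moreover have "(Im (z $ j))\<^sup>2 \<le> (\<Sum>j\<in>UNIV. (Im (z $ j))\<^sup>2)"
    by (rule member_le_sum) auto
  ultimately have "(Im (z $ j))\<^sup>2 \<le> D + (sqrt 2 * c * cmod u)\<^sup>2"
    using assms(1) by linarith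
  then show ?thesis
    using abs_le_sqrt_add_if_power2_le[of "Im (z $ j)" D "sqrt 2 * c * cmod u"] assms(2,3)
    by (simp add: add.commute)
qed

lemma real_entire_koopman_bounded_affine_on_line:
  fixes F :: "real^'n::finite \<Rightarrow> real^'n"
  assumes "real_entire F" and "koopman_bounded F"
  obtains d where "\<And>t. F (x + t *\<^sub>R v) = F x + t *\<^sub>R d"
proof -
  obtain G :: "complex^'n \<Rightarrow> complex^'n" where G: "entire_map G"
    and G_ext: "\<And>x. G (complex_vec x) = complex_vec (F x)"
    using assms(1) unfolding real_entire_def complex_vec_def by blast
  obtain D where D: "D \<ge> 0"
    and Im_le: "\<And>x v w. (\<Sum>j\<in>UNIV. (Im (G (complex_line x v w) $ j))\<^sup>2) \<le> D + 2 * ((Im w)\<^sup>2 * (norm v)\<^sup>2)"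
    using sum_Im_entire_extension_le[OF G G_ext assms(2)] by blast
  define h where "h j w = G (complex_line x v w) $ j" for j w
  have affine: "h j w = h j 0 + deriv (h j) 0 * w" for j w
  proof (rule entire_affine_if_abs_Im_le)
    show "h j holomorphic_on UNIV"
      unfolding h_def by (rule holomorphic_on_entire_map_line[OF G])
    show "\<bar>Im (h j u)\<bar> \<le> sqrt 2 * norm v * cmod u + sqrt D" for u
      unfolding h_def using Im_le D by (rule abs_Im_nth_le) simp
  qed (use D in auto)
  have h_real: "h j (complex_of_real t) = complex_of_real (F (x + t *\<^sub>R v) $ j)" for j t
    unfolding h_def complex_line_of_real G_ext by (simp add: complex_vec_def)
  have "F (x + t *\<^sub>R v) = F x + t *\<^sub>R (\<chi> j. Re (deriv (h j) 0))" for t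
  proof -
    have "F (x + t *\<^sub>R v) $ j = F x $ j + t * Re (deriv (h j) 0)" for j
      using arg_cong[OF affine[of j "complex_of_real t"], of Re] h_real[of j t] h_real[of j 0]
      by (simp add: mult.commute)
    then show ?thesis by (simp add: vec_eq_iff)
  qed
  then show ?thesis using that by blast
qed

theorem corollary1:
  fixes F :: "real^'n \<Rightarrow> real^'n"
  assumes "real_entire F"
    and "koopman_bounded F"
  shows "\<exists>(A :: real^'n^'n) (b :: real^'n). \<forall>x. F x = A *v x + b"
proof -
  have "\<exists>d. \<forall>t. F (x + t *\<^sub>R v) = F x + t *\<^sub>R d" for x v
    using real_entire_koopman_bounded_affine_on_line[OF assms] by metis
  then have "linear (\<lambda>x. F x - F 0)"
    by (rule linear_if_affine_on_lines)
  then have "F x = matrix (\<lambda>x. F x - F 0) *v x + F 0" for x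
    by (simp add: matrix_vector_mul(2))
  then show ?thesis by blast
qed

end
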